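(* Let $\mathcal{L}\subseteq\mathcal{L}_n$ be a nonzero linear subspace invariant under the conjugation action of $S_n$. Then $\mathcal{L}\cap\mathcal{L}_n^+$ contains a nonzero matrix if and only if $J\in\mathcal{L}$ (equivalently $\operatorname{span}_{\mathbb{R}}(J)\subseteq\mathcal{L}$, where $\operatorname{span}_{\mathbb{R}}(J)$ is the trivial $S_n$-module).
   Context: Let $\mathbf{1}\in\mathbb{R}^n$ be the all-ones column vector, $\mathcal{L}_n=\{Q\in \mathrm{Mat}_n(\mathbb{R}): Q\mathbf{1}=0\}$, and $\mathcal{L}_n^+$ the set of $Q\in\mathcal{L}_n$ with nonnegative off-diagonal entries. $J:=\frac1n\mathbf{1}\mathbf{1}^T-I_n$ (the rate matrix with all off-diagonal entries $\frac1n$). For $\sigma\in S_n$, $K_\sigma$ is the permutation matrix with $e_iK_\sigma=e_{\sigma(i)}$; the conjugation action is $\sigma\cdot X=K_\sigma^TXK_\sigma$, and a subspace is invariant if it is closed under this action for all $\sigma\in S_n$. *)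

theory Defs
  imports "HOL-Analysis.Analysis"
begin

text \<open>n x n real matrices are represented as real^'n^'n, with n = CARD('n).\<close>

definition ones_vec :: "real ^ 'n" where
  "ones_vec = (\<chi> i. 1)"

definition Lrate :: "(real ^ 'n ^ 'n) set" where
  "Lrate = {Q. Q *v ones_vec = 0}"

definition Lrate_plus :: "(real ^ 'n ^ 'n) set" where
  "Lrate_plus = {Q \<in> Lrate. \<forall>i j. i \<noteq> j \<longrightarrow> Q $ i $ j \<ge> 0}"

definition Jmat :: "real ^ 'n ^ 'n" where
  "Jmat = (\<chi> i j. 1 / real CARD('n) - (if i = j then 1 else 0))"

definition perm_mat :: "('n \<Rightarrow> 'n) \<Rightarrow> real ^ 'n ^ 'n" where
  "perm_mat \<sigma> = (\<chi> i j. if j = \<sigma> i then 1 else 0)"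

definition perm_conj :: "('n \<Rightarrow> 'n) \<Rightarrow> real ^ 'n ^ 'n \<Rightarrow> real ^ 'n ^ 'n" where
  "perm_conj \<sigma> X = transpose (perm_mat \<sigma>) ** X ** perm_mat \<sigma>"

definition Sn_invariant :: "(real ^ 'n ^ 'n) set \<Rightarrow> bool" where
  "Sn_invariant L \<longleftrightarrow> (\<forall>\<sigma>. \<sigma> permutes (UNIV :: 'n set) \<longrightarrow> (\<forall>X \<in> L. perm_conj \<sigma> X \<in> L))"

end

theory Submission
  imports Defs "HOL-Combinatorics.Permutations"
begin

(* Summing the conjugates of a nonzero Q in L \<inter> L_n^+ over all of S_n gives an element of L
   whose off-diagonal entries are all equal and positive; since its row sums vanish, it is a
   positive multiple of J. Conversely J itself is a nonzero element of L_n^+ as soon as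
   n \<ge> 2, which is forced by L \<noteq> {0}. *)

lemma perm_conj_nth:
  assumes "\<sigma> permutes (UNIV :: 'n::finite set)"
  shows "perm_conj \<sigma> (Q :: real^'n^'n) $ i $ j = Q $ inv \<sigma> i $ inv \<sigma> j"
proof -
  have inv_eq: "\<And>a b. (b = \<sigma> a) \<longleftrightarrow> (a = inv \<sigma> b)"
    using assms permutes_inv_eq by metis
  have if_mult: "\<And>P (x::real). (if P then 1 else 0) * x = (if P then x else 0)"
    "\<And>P (x::real). x * (if P then 1 else 0) = (if P then x else 0)" by auto
  have left: "\<And>k. (transpose (perm_mat \<sigma>) ** Q) $ i $ k = Q $ inv \<sigma> i $ k"
    by (simp add: matrix_matrix_mult_def transpose_def perm_mat_def inv_eq if_mult cong: if_cong)
  have right: "\<And>X::real^'n^'n. (X ** perm_mat \<sigma>) $ i $ j = X $ i $ inv \<sigma> j"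
    by (simp add: matrix_matrix_mult_def perm_mat_def inv_eq if_mult cong: if_cong)
  show ?thesis by (simp add: perm_conj_def left right)
qed

lemma Lrate_row_sum:
  assumes "(Q :: real^'n::finite^'n) \<in> Lrate"
  shows "(\<Sum>j\<in>UNIV. Q $ i $ j) = 0"
proof -
  have "(Q *v ones_vec) $ i = 0" using assms by (simp add: Lrate_def)
  thus ?thesis by (simp add: matrix_vector_mult_def ones_vec_def)
qed

lemma Lrate_nonzero_imp_offdiag_nonzero:
  assumes "(Q :: real^'n::finite^'n) \<in> Lrate" "Q \<noteq> 0"
  shows "\<exists>i j. i \<noteq> j \<and> Q $ i $ j \<noteq> 0"
proof (rule ccontr)
  assume "\<not> ?thesis"
  hence off: "\<And>i j. i \<noteq> j \<Longrightarrow> Q $ i $ j = 0" by blast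
  have "Q $ i $ i = 0" for i
  proof -
    have "(\<Sum>j\<in>UNIV. Q $ i $ j) = (\<Sum>j\<in>UNIV. if j = i then Q $ i $ i else 0)"
      by (rule sum.cong) (auto simp: off)
    thus ?thesis using Lrate_row_sum[OF assms(1), of i] by simp
  qed
  hence "Q = 0" using off by (metis vec_eq_iff zero_index)
  thus False using assms(2) by simp
qed

lemma Lrate_const_offdiag_eq_scaleR_Jmat:
  assumes "(Q :: real^'n::finite^'n) \<in> Lrate" and off: "\<And>i j. i \<noteq> j \<Longrightarrow> Q $ i $ j = c"
  shows "Q = (real CARD('n) * c) *\<^sub>R Jmat"
proof -
  have diag: "Q $ i $ i = c - real CARD('n) * c" for i
  proof -
    have "0 = Q $ i $ i + (\<Sum>j\<in>UNIV - {i}. Q $ i $ j)"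
      using Lrate_row_sum[OF assms(1), of i] by (simp add: sum.remove)
    also have "(\<Sum>j\<in>UNIV - {i}. Q $ i $ j) = (real CARD('n) - 1) * c"
      by (simp add: off card_Diff_singleton of_nat_diff)
    finally show ?thesis by (simp add: algebra_simps)
  qed
  show ?thesis
    by (simp add: vec_eq_iff Jmat_def diag off algebra_simps)
qed

lemma Jmat_in_Lrate_plus: "(Jmat :: real^'n::finite^'n) \<in> Lrate_plus"
proof -
  have "(Jmat *v ones_vec) $ i = (0 :: real^'n) $ i" for i
    by (simp add: matrix_vector_mult_def ones_vec_def Jmat_def sum_subtractf)
  hence "Jmat *v ones_vec = (0 :: real^'n)" by (simp add: vec_eq_iff)
  thus ?thesis by (simp add: Lrate_plus_def Lrate_def Jmat_def)
qed

lemma Jmat_neq_0: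
  assumes "a \<noteq> (b :: 'n::finite)"
  shows "(Jmat :: real^'n^'n) \<noteq> 0"
proof
  assume "Jmat = (0 :: real^'n^'n)"
  hence "Jmat $ a $ b = (0 :: real)" by simp
  thus False using assms by (simp add: Jmat_def)
qed

lemma permutes_map_pair:
  assumes "k \<noteq> (l :: 'n)" "i \<noteq> j"
  obtains \<tau> where "\<tau> permutes (UNIV :: 'n set)" "\<tau> k = i" "\<tau> l = j"
proof -
  define t where "t = Transposition.transpose k i"
  have "t l \<noteq> i" using \<open>k \<noteq> l\<close> unfolding t_def by (auto simp: Transposition.transpose_def)
  define \<tau> where "\<tau> = Transposition.transpose (t l) j \<circ> t"
  have "\<tau> permutes UNIV" unfolding \<tau>_def t_def
    by (intro permutes_compose permutes_swap_id) auto
  moreover have "\<tau> k = i" using \<open>t l \<noteq> i\<close> \<open>i \<noteq> j\<close> by (simp add: \<tau>_def t_def)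
  moreover have "\<tau> l = j" by (simp add: \<tau>_def)
  ultimately show ?thesis using that by blast
qed

definition perm_conj_sum :: "real^'n^'n \<Rightarrow> real^'n^'n" where
  "perm_conj_sum Q = (\<Sum>\<sigma> | \<sigma> permutes (UNIV :: 'n set). perm_conj \<sigma> Q)"

lemma perm_conj_sum_in_subspace:
  assumes "subspace L" "Sn_invariant L" "Q \<in> L"
  shows "perm_conj_sum Q \<in> L"
  unfolding perm_conj_sum_def
  using assms by (intro subspace_sum) (auto simp: Sn_invariant_def)

lemma perm_conj_sum_nth:
  "perm_conj_sum (Q :: real^'n::finite^'n) $ i $ j
     = (\<Sum>\<sigma> | \<sigma> permutes (UNIV :: 'n set). Q $ \<sigma> i $ \<sigma> j)"
proof -
  let ?P = "{\<sigma>. \<sigma> permutes (UNIV :: 'n set)}"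
  have "perm_conj_sum Q $ i $ j = (\<Sum>\<sigma>\<in>?P. Q $ inv \<sigma> i $ inv \<sigma> j)"
    by (simp add: perm_conj_sum_def perm_conj_nth)
  also have "\<dots> = (\<Sum>\<sigma>\<in>?P. Q $ inv (inv \<sigma>) i $ inv (inv \<sigma>) j)"
    by (rule sum_permutations_inverse)
  also have "\<dots> = (\<Sum>\<sigma>\<in>?P. Q $ \<sigma> i $ \<sigma> j)"
    by (rule sum.cong) (auto simp: permutes_inv_inv)
  finally show ?thesis .
qed

lemma perm_conj_sum_nth_permute:
  assumes "\<tau> permutes (UNIV :: 'n::finite set)"
  shows "perm_conj_sum (Q :: real^'n^'n) $ \<tau> k $ \<tau> l = perm_conj_sum Q $ k $ l"
proof -
  have "perm_conj_sum Q $ k $ l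
      = (\<Sum>\<sigma> | \<sigma> permutes (UNIV :: 'n set). Q $ (\<sigma> \<circ> \<tau>) k $ (\<sigma> \<circ> \<tau>) l)"
    unfolding perm_conj_sum_nth by (rule sum_permutations_compose_right[OF assms])
  thus ?thesis by (simp add: perm_conj_sum_nth)
qed

lemma perm_conj_sum_offdiag_eq:
  assumes "i \<noteq> j" "k \<noteq> (l :: 'n::finite)"
  shows "perm_conj_sum (Q :: real^'n^'n) $ i $ j = perm_conj_sum Q $ k $ l"
  using assms by (metis permutes_map_pair perm_conj_sum_nth_permute)

lemma perm_conj_sum_offdiag_pos:
  assumes "Q \<in> Lrate_plus" "a \<noteq> b" "Q $ a $ b \<noteq> 0"
  shows "perm_conj_sum (Q :: real^'n::finite^'n) $ a $ b > 0"
proof -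
  let ?f = "\<lambda>\<sigma>. Q $ \<sigma> a $ \<sigma> b"
  let ?P = "{\<sigma>. \<sigma> permutes (UNIV :: 'n set)}"
  have nonneg: "?f \<sigma> \<ge> 0" if "\<sigma> \<in> ?P" for \<sigma>
    using that assms(1,2) by (auto simp: Lrate_plus_def dest: permutes_inj injD)
  have "id \<in> ?P" by (simp add: permutes_id)
  moreover have "?f id > 0" using nonneg[OF \<open>id \<in> ?P\<close>] assms(3) by simp
  ultimately have "sum ?f ?P > 0"
    using nonneg finite_permutations by (intro sum_pos2[where i = id]) auto
  thus ?thesis by (simp add: perm_conj_sum_nth)
qed

theorem mainTheorem10:
  fixes L :: "(real ^ 'n ^ 'n) set"
  assumes "subspace L"
    and "L \<subseteq> Lrate"
    and "L \<noteq> {0}"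
    and "Sn_invariant L"
  shows "(\<exists>Q \<in> L \<inter> Lrate_plus. Q \<noteq> 0) \<longleftrightarrow> Jmat \<in> L"
proof
  assume "\<exists>Q \<in> L \<inter> Lrate_plus. Q \<noteq> 0"
  then obtain Q where Q: "Q \<in> L" "Q \<in> Lrate_plus" "Q \<noteq> 0" by blast
  moreover have "Q \<in> Lrate" using Q(2) by (simp add: Lrate_plus_def)
  ultimately obtain a b where ab: "a \<noteq> b" "Q $ a $ b \<noteq> 0"
    using Lrate_nonzero_imp_offdiag_nonzero by blast
  define M where "M = perm_conj_sum Q"
  define c where "c = M $ a $ b"
  have "M \<in> L" unfolding M_def using assms(1,4) Q(1) by (rule perm_conj_sum_in_subspace)
  have "c > 0" unfolding c_def M_def using Q(2) ab by (rule perm_conj_sum_offdiag_pos)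
  have "M = (real CARD('n) * c) *\<^sub>R Jmat"
    using \<open>M \<in> L\<close> assms(2) ab(1) unfolding c_def M_def
    by (intro Lrate_const_offdiag_eq_scaleR_Jmat) (auto intro: perm_conj_sum_offdiag_eq)
  hence "Jmat = inverse (real CARD('n) * c) *\<^sub>R M" using \<open>c > 0\<close> by (simp add: field_simps)
  thus "Jmat \<in> L" using \<open>M \<in> L\<close> assms(1) by (metis subspace_mul)
next
  assume "Jmat \<in> L"
  obtain Q where "Q \<in> L" "Q \<noteq> 0" using assms(3) subspace_0[OF assms(1)] by blast
  then obtain a b :: 'n where "a \<noteq> b"
    using Lrate_nonzero_imp_offdiag_nonzero assms(2) by blast
  thus "\<exists>Q \<in> L \<inter> Lrate_plus. Q \<noteq> 0"
    using \<open>Jmat \<in> L\<close> Jmat_in_Lrate_plus Jmat_neq_0 by blast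
qed

end
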